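(* Let $\mathbf{x}=(\mathbf{x}_1,\mathbf{x}_2,\mathbf{x}_3)$ have i.i.d. Bernoulli$(0.5)$ coordinates, and let $\mathbf{y}$ be distributed as follows: if $\mathbf{x}_3=1$, $\mathbf{y}=\mathbf{x}_1$ with probability $0.9$ and $1-\mathbf{x}_1$ otherwise; if $\mathbf{x}_3=0$, $\mathbf{y}=\mathbf{x}_2$ with probability $0.9$ and $1-\mathbf{x}_2$ otherwise. Let $e_{\mathrm{encode}}(\mathbf{x})=\xi_1=[1,0,0]$ if $\mathbf{x}_3=1$ and $\xi_2=[0,1,0]$ otherwise. Then $e_{\mathrm{encode}}$ maximizes $\mathrm{EVAL\text{-}X}(q,e)$ over all reductive explanations $e$ (those with $|e(\mathbf{x})|\le 1$ for all $\mathbf{x}$, i.e. selecting at most one coordinate), and $e_{\mathrm{encode}}$ is encoding.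
   Context: $q$ is the joint distribution of $(\mathbf{y},\mathbf{x})$ just described. An explanation is a map $e$ from inputs to masks in $\{0,1\}^3$; $|e(\mathbf{x})|$ is the number of ones. $\mathbf{x}_{\mathbf{v}}$ denotes the values of the coordinates selected by $\mathbf{v}$; $\mathbf{x}_{e(\mathbf{x})}=(e(\mathbf{x}),\mathbf{x}_{e(\mathbf{x})})$ is written $(\mathbf{v},\mathbf{a})$; $\mathbf{E}_{\mathbf{v}}=\mathbb{1}[e(\mathbf{x})=\mathbf{v}]$. The EVAL-X score is $\mathrm{EVAL\text{-}X}(q,e)=\mathbb{E}_{(\mathbf{v},\mathbf{a})\sim q(\mathbf{x}_{e(\mathbf{x})})}\mathbb{E}_{\mathbf{y}\sim q(\mathbf{y}\mid \mathbf{x}_{e(\mathbf{x})}=(\mathbf{v},\mathbf{a}))}[\log q(\mathbf{y}\mid \mathbf{x}_{\mathbf{v}}=\mathbf{a})]$. $e$ is encoding if there is a set $\mathbf{S}$ of pairs with $q(\mathbf{x}_{e(\mathbf{x})}\in\mathbf{S})>0$ such that for every $(\mathbf{v},\mathbf{a})\in\mathbf{S}$, $\mathbf{y}$ is not conditionally independent of $\mathbf{E}_{\mathbf{v}}$ given $\mathbf{x}_{\mathbf{v}}=\mathbf{a}$. *)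

theory Defs
  imports Complex_Main "HOL-Library.Numeral_Type"
begin

text \<open>Inputs x in {0,1}^3 are functions 3 => bool (coordinate x_1 is index 0,
  x_2 index 1, x_3 index 2); labels y are bool; masks v are also 3 => bool.\<close>

type_synonym inp = "3 \<Rightarrow> bool"

definition qj :: "bool \<Rightarrow> inp \<Rightarrow> real" where
  "qj y x = (1/8) * (if x 2 then (if y = x 0 then 9/10 else 1/10)
                              else (if y = x 1 then 9/10 else 1/10))"

definition Pq :: "(bool \<Rightarrow> inp \<Rightarrow> bool) \<Rightarrow> real" where
  "Pq E = (\<Sum>yx\<in>(UNIV :: (bool \<times> inp) set).
             if E (fst yx) (snd yx) then qj (fst yx) (snd yx) else 0)"

definition sel :: "inp \<Rightarrow> inp \<Rightarrow> inp" where
  "sel v x = (\<lambda>i. if v i then x i else False)"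

definition agrees :: "inp \<Rightarrow> inp \<Rightarrow> inp \<Rightarrow> bool" where
  "agrees v a x \<longleftrightarrow> (\<forall>i. v i \<longrightarrow> x i = a i)"

definition condq :: "bool \<Rightarrow> inp \<Rightarrow> inp \<Rightarrow> real" where
  "condq y v a = Pq (\<lambda>y' x. y' = y \<and> agrees v a x) / Pq (\<lambda>_ x. agrees v a x)"

definition evalx :: "(inp \<Rightarrow> inp) \<Rightarrow> real" where
  "evalx e = (\<Sum>va\<in>(UNIV :: (inp \<times> inp) set).
      Pq (\<lambda>_ x. e x = fst va \<and> sel (fst va) x = snd va) *
      (\<Sum>y\<in>(UNIV :: bool set).
         (Pq (\<lambda>y' x. y' = y \<and> e x = fst va \<and> sel (fst va) x = snd va)
            / Pq (\<lambda>_ x. e x = fst va \<and> sel (fst va) x = snd va))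
         * ln (condq y (fst va) (snd va))))"

text \<open>y is conditionally independent of E_v = [e(x) = v] given x_v = a
  (product form, trivially true when the conditioning event is null).\<close>
definition cond_indep_yE :: "(inp \<Rightarrow> inp) \<Rightarrow> inp \<Rightarrow> inp \<Rightarrow> bool" where
  "cond_indep_yE e v a \<longleftrightarrow>
     (\<forall>y b. Pq (\<lambda>y' x. y' = y \<and> (e x = v) = b \<and> agrees v a x) * Pq (\<lambda>_ x. agrees v a x)
          = Pq (\<lambda>y' x. y' = y \<and> agrees v a x) * Pq (\<lambda>_ x. (e x = v) = b \<and> agrees v a x))"

definition encoding :: "(inp \<Rightarrow> inp) \<Rightarrow> bool" where
  "encoding e \<longleftrightarrow> (\<exists>S. Pq (\<lambda>_ x. (e x, sel (e x) x) \<in> S) > 0 \<and>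
                        (\<forall>(v, a)\<in>S. \<not> cond_indep_yE e v a))"

definition reductive :: "(inp \<Rightarrow> inp) \<Rightarrow> bool" where
  "reductive e \<longleftrightarrow> (\<forall>x. card {i. e x i} \<le> 1)"

definition e_encode :: "inp \<Rightarrow> inp" where
  "e_encode x = (if x 2 then (\<lambda>i. i = 0) else (\<lambda>i. i = 1))"

end

theory Submission
  imports Defs
begin

text \<open>
  EVAL-X is a sum over inputs x of a local score \<Sum>y q(y, x) ln q(y | x_v = a) with
  v = e(x) and a = x_v: the weights q(y | e(x) = v, x_v = a) cancel against q(e(x) = v, x_v = a).
  Masks can therefore be compared input by input. Revealing x_3 or nothing leaves y uniform;
  revealing x_1 or x_2 gives q(y | x_v = a) = 0.7 on the revealed value, which pays off exactly
  when y copies that coordinate. e_encode always reveals the copied coordinate, and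
  10 ln(1/2) \<le> 9 ln 0.7 + ln 0.3 makes this the best local choice. It is encoding because on the
  mask \<xi>_1, learning that e_encode chose \<xi>_1 (i.e. x_3 = 1) raises the probability of y = x_1
  given x_1 from 0.7 to 0.9.
\<close>

lemma mult_sum_divide_cancel:
  fixes b :: real
  assumes "\<And>y. y \<in> Y \<Longrightarrow> b = 0 \<Longrightarrow> a y = 0"
  shows "b * (\<Sum>y\<in>Y. a y / b * c y) = (\<Sum>y\<in>Y. a y * c y)"
  using assms by (cases "b = 0") (simp_all add: sum_distrib_left)

lemma sum_fibres_weighted:
  fixes g :: "'a::finite \<Rightarrow> 'k::finite" and w :: "'a \<Rightarrow> 'b::semiring_0"
  shows "(\<Sum>k\<in>UNIV. (\<Sum>z | g z = k. w z) * h k) = (\<Sum>z\<in>UNIV. w z * h (g z))"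
proof -
  have "(\<Sum>k\<in>UNIV. (\<Sum>z | g z = k. w z) * h k) = (\<Sum>k\<in>UNIV. \<Sum>z | g z = k. w z * h k)"
    by (simp add: sum_distrib_right)
  also have "\<dots> = (\<Sum>k\<in>UNIV. \<Sum>z | g z = k. w z * h (g z))"
    by (intro sum.cong refl) auto
  also have "\<dots> = (\<Sum>z\<in>UNIV. w z * h (g z))"
    using sum.group[of UNIV UNIV g "\<lambda>z. w z * h (g z)"] by simp
  finally show ?thesis .
qed

lemma mask_card_le_1_cases:
  fixes v :: "'a::finite \<Rightarrow> bool"
  assumes "card {i. v i} \<le> 1"
  shows "v = (\<lambda>_. False) \<or> (\<exists>k. v = (\<lambda>i. i = k))"
proof (cases "card {i. v i} = 0")
  case True
  then show ?thesis by auto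
next
  case False
  with assms have "card {i. v i} = 1" by linarith
  then obtain k where "{i. v i} = {k}" by (rule card_1_singletonE)
  then show ?thesis by (auto simp: set_eq_iff)
qed

lemma three_cases: "(i::3) = 0 \<or> i = 1 \<or> i = 2"
proof (cases i)
  case (of_int z)
  then have "z = 0 \<or> z = 1 \<or> z = 2" by auto
  then show ?thesis using of_int by auto
qed

definition bits :: "bool \<Rightarrow> bool \<Rightarrow> bool \<Rightarrow> inp" where
  "bits a b c = (\<lambda>i. if i = 0 then a else if i = 1 then b else c)"

lemma bits_apply [simp]: "bits a b c 0 = a" "bits a b c 1 = b" "bits a b c 2 = c"
  by (simp_all add: bits_def)

lemma bits_coordinates: "bits (x 0) (x 1) (x 2) = x"
proof
  fix i :: 3
  show "bits (x 0) (x 1) (x 2) i = x i" using three_cases[of i] by auto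
qed

lemma sum_inp_bits:
  "(\<Sum>x\<in>UNIV. f x) = (\<Sum>a\<in>UNIV. \<Sum>b\<in>UNIV. \<Sum>c\<in>UNIV. f (bits a b c))"
proof -
  have "(\<Sum>x\<in>UNIV. f x) = (\<Sum>(a, b, c)\<in>UNIV. f (bits a b c))"
    by (rule sum.reindex_bij_witness[where i = "\<lambda>(a, b, c). bits a b c"
          and j = "\<lambda>x. (x 0, x 1, x 2)"]) (auto simp: bits_coordinates)
  then show ?thesis
    unfolding UNIV_Times_UNIV[symmetric] sum.cartesian_product[symmetric] .
qed

lemma Pq_eq_sum: "Pq E = (\<Sum>y\<in>UNIV. \<Sum>x\<in>UNIV. if E y x then qj y x else 0)"
  unfolding Pq_def sum.cartesian_product UNIV_Times_UNIV by (simp add: split_def)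

lemma Pq_eq_sum_bits:
  "Pq E = (\<Sum>y\<in>UNIV. \<Sum>a\<in>UNIV. \<Sum>b\<in>UNIV. \<Sum>c\<in>UNIV.
            if E y (bits a b c) then qj y (bits a b c) else 0)"
  unfolding Pq_eq_sum sum_inp_bits ..

lemma Pq_nonneg: "0 \<le> Pq E"
  unfolding Pq_def by (rule sum_nonneg) (simp add: qj_def)

lemma Pq_mono: "(\<And>y x. E y x \<Longrightarrow> F y x) \<Longrightarrow> Pq E \<le> Pq F"
  unfolding Pq_def by (rule sum_mono) (auto simp: qj_def)

lemma Pq_null_mono: "Pq F = 0 \<Longrightarrow> (\<And>y x. E y x \<Longrightarrow> F y x) \<Longrightarrow> Pq E = 0"
  by (metis Pq_mono Pq_nonneg order_antisym)

lemma Pq_label_event: "Pq (\<lambda>y' x. y' = y \<and> E x) = (\<Sum>x | E x. qj y x)"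
proof -
  have "Pq (\<lambda>y' x. y' = y \<and> E x)
      = (\<Sum>x\<in>UNIV. \<Sum>y'\<in>UNIV. if y' = y then (if E x then qj y x else 0) else 0)"
    unfolding Pq_eq_sum by (subst sum.swap) (intro sum.cong refl, simp)
  also have "\<dots> = (\<Sum>x\<in>UNIV. if E x then qj y x else 0)"
    by simp
  also have "\<dots> = (\<Sum>x | E x. qj y x)"
    using sum.inter_filter[of UNIV "qj y" E] by simp
  finally show ?thesis .
qed

lemma agrees_unit_mask [simp]: "agrees (\<lambda>i. i = k) a x \<longleftrightarrow> x k = a k"
  by (simp add: agrees_def)

lemma agrees_empty_mask [simp]: "agrees (\<lambda>_. False) a x"
  by (simp add: agrees_def)

lemma condq_uninformative:
  assumes "v = (\<lambda>_. False) \<or> v = (\<lambda>i. i = 2)"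
  shows "condq y v a = 1/2"
  using assms unfolding condq_def Pq_eq_sum_bits
  by (elim disjE; cases y; cases "a 2") (simp_all add: qj_def UNIV_bool)

lemma condq_informative:
  assumes "k = 0 \<or> k = 1"
  shows "condq y (\<lambda>i. i = k) a = (if y = a k then 7/10 else 3/10)"
  using assms unfolding condq_def Pq_eq_sum_bits
  by (elim disjE; cases y; cases "a k") (simp_all add: qj_def UNIV_bool)

definition local_score :: "inp \<Rightarrow> inp \<Rightarrow> real" where
  "local_score v x = (\<Sum>y\<in>UNIV. qj y x * ln (condq y v (sel v x)))"

lemma evalx_eq_sum_local_score: "evalx e = (\<Sum>x\<in>UNIV. local_score (e x) x)"
proof -
  define key where "key x = (e x, sel (e x) x)" for x
  have event: "(e x = fst va \<and> sel (fst va) x = snd va) \<longleftrightarrow> key x = va" for x va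
    by (auto simp: key_def)
  have "evalx e = (\<Sum>va\<in>UNIV. Pq (\<lambda>_ x. key x = va) *
      (\<Sum>y\<in>UNIV. Pq (\<lambda>y' x. y' = y \<and> key x = va) / Pq (\<lambda>_ x. key x = va)
                 * ln (condq y (fst va) (snd va))))"
    unfolding evalx_def event ..
  also have "\<dots> = (\<Sum>va\<in>UNIV. \<Sum>y\<in>UNIV.
      Pq (\<lambda>y' x. y' = y \<and> key x = va) * ln (condq y (fst va) (snd va)))"
    \<comment> \<open>if q(key = va) = 0 then every q(y, key = va) = 0, so the junk quotients _ / 0 do no harm\<close>
    by (intro sum.cong refl mult_sum_divide_cancel) (erule Pq_null_mono, simp)
  also have "\<dots> = (\<Sum>y\<in>UNIV. \<Sum>x\<in>UNIV. qj y x * ln (condq y (fst (key x)) (snd (key x))))"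
    by (subst sum.swap) (simp add: Pq_label_event sum_fibres_weighted)
  also have "\<dots> = (\<Sum>x\<in>UNIV. local_score (e x) x)"
    unfolding local_score_def key_def fst_conv snd_conv by (rule sum.swap)
  finally show ?thesis .
qed

definition signal :: "inp \<Rightarrow> bool" where
  "signal x = (if x 2 then x 0 else x 1)"

lemma qj_signal: "qj y x = (if y = signal x then 9/80 else 1/80)"
  by (simp add: qj_def signal_def)

definition optimal_score :: real where
  "optimal_score = (9 * ln (7/10) + ln (3/10)) / 80"

lemma local_score_uninformative:
  assumes "v = (\<lambda>_. False) \<or> v = (\<lambda>i. i = 2)"
  shows "local_score v x = ln (1/2) / 8"
  by (cases "signal x")
    (simp_all add: local_score_def condq_uninformative[OF assms] qj_signal UNIV_bool)

lemma local_score_informative: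
  assumes "k = 0 \<or> k = 1"
  shows "local_score (\<lambda>i. i = k) x =
    (if x k = signal x then optimal_score else (9 * ln (3/10) + ln (7/10)) / 80)"
  by (cases "signal x"; cases "x k")
    (simp_all add: local_score_def condq_informative[OF assms] qj_signal UNIV_bool sel_def
      optimal_score_def)

lemma e_encode_selects_signal:
  "\<exists>k. (k = 0 \<or> k = 1) \<and> e_encode x = (\<lambda>i. i = k) \<and> x k = signal x"
  by (cases "x 2") (auto simp: e_encode_def signal_def)

lemma local_score_e_encode: "local_score (e_encode x) x = optimal_score"
  using e_encode_selects_signal local_score_informative by metis

lemma uninformative_score_le_optimal: "ln (1/2) / 8 \<le> optimal_score"
proof -
  have "10 * ln (1/2::real) = ln ((1/2) ^ 10)" by (simp add: ln_realpow)
  also have "\<dots> \<le> ln ((7/10) ^ 9 * (3/10::real))" by (simp add: power_divide)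
  also have "\<dots> = 9 * ln (7/10) + ln (3/10::real)" by (subst ln_mult) (simp_all add: ln_realpow)
  finally show ?thesis unfolding optimal_score_def by simp
qed

lemma local_score_le_e_encode:
  assumes "card {i. v i} \<le> 1"
  shows "local_score v x \<le> local_score (e_encode x) x"
proof -
  have "local_score v x \<le> optimal_score"
    using mask_card_le_1_cases[OF assms]
  proof (elim disjE exE)
    assume "v = (\<lambda>_. False)"
    then have "local_score v x = ln (1/2) / 8" by (intro local_score_uninformative) simp
    with uninformative_score_le_optimal show ?thesis by simp
  next
    fix k assume v: "v = (\<lambda>i. i = k)"
    consider "k = 0 \<or> k = 1" | "k = 2" using three_cases by blast
    then show ?thesis
    proof cases
      case 1
      have "ln (3/10) \<le> ln (7/10::real)" by simp
      then show ?thesis using v local_score_informative[OF 1] by (simp add: optimal_score_def)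
    next
      case 2
      with v have "local_score v x = ln (1/2) / 8" by (intro local_score_uninformative) simp
      with uninformative_score_le_optimal show ?thesis by simp
    qed
  qed
  then show ?thesis by (simp add: local_score_e_encode)
qed

lemma evalx_le_e_encode: "reductive e \<Longrightarrow> evalx e \<le> evalx e_encode"
  unfolding evalx_eq_sum_local_score reductive_def by (intro sum_mono local_score_le_e_encode) blast

lemma reductive_e_encode: "reductive e_encode"
  by (simp add: reductive_def e_encode_def)

lemma e_encode_eq_first_mask: "e_encode x = (\<lambda>i. i = 0) \<longleftrightarrow> x 2"
  by (auto simp: e_encode_def dest: fun_cong[of _ _ 0])

lemma e_encode_not_cond_indep: "\<not> cond_indep_yE e_encode (\<lambda>i. i = 0) a"
proof
  have joint: "Pq (\<lambda>y x. y = a 0 \<and> x 2 \<and> x 0 = a 0) = 9/40"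
    and encoded: "Pq (\<lambda>_ x. x 2 \<and> x 0 = a 0) = 1/4"
    and label: "Pq (\<lambda>y x. y = a 0 \<and> x 0 = a 0) = 7/20"
    and coordinate: "Pq (\<lambda>_ x. x 0 = a 0) = 1/2"
    by (cases "a 0"; simp add: Pq_eq_sum_bits qj_def UNIV_bool)+
  assume "cond_indep_yE e_encode (\<lambda>i. i = 0) a"
  then have "Pq (\<lambda>y x. y = a 0 \<and> (e_encode x = (\<lambda>i. i = 0)) = True \<and> agrees (\<lambda>i. i = 0) a x)
      * Pq (\<lambda>_ x. agrees (\<lambda>i. i = 0) a x)
    = Pq (\<lambda>y x. y = a 0 \<and> agrees (\<lambda>i. i = 0) a x)
      * Pq (\<lambda>_ x. (e_encode x = (\<lambda>i. i = 0)) = True \<and> agrees (\<lambda>i. i = 0) a x)"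
    unfolding cond_indep_yE_def by blast
  then show False by (simp add: e_encode_eq_first_mask joint encoded label coordinate)
qed

lemma encoding_e_encode: "encoding e_encode"
  unfolding encoding_def
proof (intro exI conjI)
  let ?S = "{(\<lambda>i::3. i = 0)} \<times> (UNIV :: inp set)"
  have "Pq (\<lambda>_ x. (e_encode x, sel (e_encode x) x) \<in> ?S) = Pq (\<lambda>_ x. x 2)"
    by (simp add: e_encode_eq_first_mask)
  also have "\<dots> = 1/2" by (simp add: Pq_eq_sum_bits qj_def UNIV_bool)
  finally show "Pq (\<lambda>_ x. (e_encode x, sel (e_encode x) x) \<in> ?S) > 0" by simp
  show "\<forall>(v, a)\<in>?S. \<not> cond_indep_yE e_encode v a"
    using e_encode_not_cond_indep by auto
qed

theorem lemma6:
  shows "reductive e_encode \<and> (\<forall>e. reductive e \<longrightarrow> evalx e \<le> evalx e_encode)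
         \<and> encoding e_encode"
  using reductive_e_encode evalx_le_e_encode encoding_e_encode by blast

end
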